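(* Let $X$ be a finite set with $|X|\ge 3$, let $T\in B(X)$, and let $\mathcal T\subseteq\binom{X}{2}$ be a triplet cover for $T$. Then $|\mathcal T|\ge 2|X|-3$. Moreover this bound is tight: for every $T\in B(X)$ there exists a triplet cover for $T$ of cardinality exactly $2|X|-3$.
   Context: A binary phylogenetic $X$-tree is an unrooted tree $T=(V,E)$ whose leaf set is $X$ and in which every non-leaf vertex is unlabelled and has degree three; $B(X)$ is the set of such trees. Let $\mathring V$ denote the set of interior vertices of $T$. Elements of $\binom{X}{2}$ are written $ab$, triples in $\binom{X}{3}$ are written $abc$. Given $\mathcal T\subseteq\binom{X}{2}$, a triple $abc$ supports $v\in\mathring V$ (relative to $\mathcal T$) if $a,b,c$ lie one in each of the three connected components of $T$ with $v$ and its incident edges removed, and $ab,ac,bc\in\mathcal T$. $\mathcal T$ is a triplet cover for $T$ if every $v\in\mathring V$ is supported by some triple. *)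

theory Defs
  imports Main
begin

definition graph :: "'a set \<Rightarrow> 'a set set \<Rightarrow> bool" where
  "graph V E \<longleftrightarrow> finite V \<and> (\<forall>e\<in>E. e \<subseteq> V \<and> card e = 2)"

definition degree :: "'a set set \<Rightarrow> 'a \<Rightarrow> nat" where
  "degree E v = card {e\<in>E. v \<in> e}"

definition connected_in :: "'a set \<Rightarrow> 'a set set \<Rightarrow> 'a \<Rightarrow> 'a \<Rightarrow> bool" where
  "connected_in W E u w \<longleftrightarrow>
     u \<in> W \<and> w \<in> W \<and> (u, w) \<in> {(x, y). x \<in> W \<and> y \<in> W \<and> {x, y} \<in> E}\<^sup>*"

definition is_cycle :: "'a set set \<Rightarrow> 'a list \<Rightarrow> bool" where
  "is_cycle E cs \<longleftrightarrow> length cs \<ge> 3 \<and> distinct cs \<and>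
     (\<forall>i < length cs. {cs ! i, cs ! ((i + 1) mod length cs)} \<in> E)"

definition is_tree :: "'a set \<Rightarrow> 'a set set \<Rightarrow> bool" where
  "is_tree V E \<longleftrightarrow> graph V E \<and> V \<noteq> {} \<and>
     (\<forall>u\<in>V. \<forall>w\<in>V. connected_in V E u w) \<and> (\<nexists>cs. is_cycle E cs)"

definition binary_phylo_tree :: "'a set \<Rightarrow> 'a set \<Rightarrow> 'a set set \<Rightarrow> bool" where
  "binary_phylo_tree X V E \<longleftrightarrow> is_tree V E \<and> X \<subseteq> V \<and>
     {v\<in>V. degree E v = 1} = X \<and> (\<forall>v\<in>V - X. degree E v = 3)"

definition interior :: "'a set \<Rightarrow> 'a set \<Rightarrow> 'a set" where
  "interior X V = V - X"

text \<open>a, b, c lie one in each of the (three) components of T minus v, i.e. they lie in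
  pairwise distinct components of the graph with v and its incident edges removed, and
  the three pairs belong to the set of pairs \<T>.\<close>
definition supports :: "'a set \<Rightarrow> 'a set set \<Rightarrow> 'a set set \<Rightarrow> 'a \<Rightarrow> 'a \<Rightarrow> 'a \<Rightarrow> 'a \<Rightarrow> bool" where
  "supports V E \<T> a b c v \<longleftrightarrow>
     a \<in> V - {v} \<and> b \<in> V - {v} \<and> c \<in> V - {v} \<and>
     \<not> connected_in (V - {v}) E a b \<and> \<not> connected_in (V - {v}) E a c \<and>
     \<not> connected_in (V - {v}) E b c \<and>
     {a, b} \<in> \<T> \<and> {a, c} \<in> \<T> \<and> {b, c} \<in> \<T>"

definition triplet_cover :: "'a set \<Rightarrow> 'a set \<Rightarrow> 'a set set \<Rightarrow> 'a set set \<Rightarrow> bool" where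
  "triplet_cover X V E \<T> \<longleftrightarrow>
     \<T> \<subseteq> {p. p \<subseteq> X \<and> card p = 2} \<and>
     (\<forall>v\<in>interior X V. \<exists>a\<in>X. \<exists>b\<in>X. \<exists>c\<in>X. supports V E \<T> a b c v)"

end

theory Submission
  imports Defs "HOL-Library.Transitive_Closure_Table"
begin

text \<open>Every binary phylogenetic tree with at least four leaves has a cherry: leaves \<open>a\<close>, \<open>b\<close>
  adjacent to a vertex \<open>v\<close> whose third neighbour \<open>u\<close> is interior. A triple supporting \<open>v\<close>
  contains \<open>a\<close>, \<open>b\<close> and a third leaf \<open>c\<close>, so every triplet cover contains \<open>ab\<close>, \<open>ac\<close>
  and \<open>bc\<close>. Merging \<open>a\<close> into \<open>b\<close> maps the cover onto a cover of the tree obtained by pruning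
  \<open>a\<close> and suppressing \<open>v\<close>, with at least two pairs fewer. Conversely, the triple supporting
  \<open>u\<close> in a cover of the pruned tree contains \<open>b\<close> and some \<open>c\<close>, and adding \<open>ab\<close> and
  \<open>ac\<close> yields a cover of the original tree. Induction on \<open>|X|\<close>, starting from the three-leaf
  star, where the three pairs are necessary and sufficient, gives both the bound
  \<open>2|X| - 3\<close> and its tightness.\<close>

section \<open>Walks within a vertex set\<close>

definition adj_within :: "'a set \<Rightarrow> 'a set set \<Rightarrow> ('a \<times> 'a) set" where
  "adj_within W E = {(x, y). x \<in> W \<and> y \<in> W \<and> {x, y} \<in> E}"

definition neighbours :: "'a set set \<Rightarrow> 'a \<Rightarrow> 'a set" where
  "neighbours E v = {y. {v, y} \<in> E}"

lemma connected_in_iff: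
  "connected_in W E u w \<longleftrightarrow> u \<in> W \<and> w \<in> W \<and> (u, w) \<in> (adj_within W E)\<^sup>*"
  unfolding connected_in_def adj_within_def by simp

lemma connected_in_refl: "x \<in> W \<Longrightarrow> connected_in W E x x"
  by (simp add: connected_in_iff)

lemma adj_within_sym: "(x, y) \<in> adj_within W E \<Longrightarrow> (y, x) \<in> adj_within W E"
  by (auto simp: adj_within_def insert_commute)

lemma connected_in_sym: "connected_in W E x y \<Longrightarrow> connected_in W E y x"
proof -
  have "sym (adj_within W E)" by (auto simp: sym_def intro: adj_within_sym)
  then have "sym ((adj_within W E)\<^sup>*)" by (rule sym_rtrancl)
  then show "connected_in W E x y \<Longrightarrow> connected_in W E y x"
    by (auto simp: connected_in_iff sym_def)
qed

lemma connected_in_trans: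
  "connected_in W E x y \<Longrightarrow> connected_in W E y z \<Longrightarrow> connected_in W E x z"
  by (auto simp: connected_in_iff)

lemma connected_in_edge: "x \<in> W \<Longrightarrow> y \<in> W \<Longrightarrow> {x, y} \<in> E \<Longrightarrow> connected_in W E x y"
  by (auto simp: connected_in_iff adj_within_def)

lemma connected_in_mono: "connected_in W E x y \<Longrightarrow> W \<subseteq> W' \<Longrightarrow> connected_in W' E x y"
proof -
  assume "connected_in W E x y" "W \<subseteq> W'"
  moreover have "adj_within W E \<subseteq> adj_within W' E"
    using \<open>W \<subseteq> W'\<close> by (auto simp: adj_within_def)
  ultimately show ?thesis by (auto simp: connected_in_iff dest: rtrancl_mono[THEN subsetD])
qed

lemma connected_in_avoid:
  assumes "connected_in W E p x" and "\<not> connected_in W E p v"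
  shows "connected_in (W - {v}) E p x"
proof -
  from assms(1) have pW: "p \<in> W" and path: "(p, x) \<in> (adj_within W E)\<^sup>*"
    by (auto simp: connected_in_iff)
  have "(p, x) \<in> (adj_within (W - {v}) E)\<^sup>*" using path
  proof (induction rule: rtrancl_induct)
    case (step y z)
    have "(p, z) \<in> (adj_within W E)\<^sup>*" using step.hyps by (rule rtrancl_into_rtrancl)
    then have "connected_in W E p y" "connected_in W E p z"
      using pW step.hyps by (auto simp: connected_in_iff adj_within_def)
    then have "y \<noteq> v" "z \<noteq> v" using assms(2) by auto
    then have "(y, z) \<in> adj_within (W - {v}) E" using step.hyps(2) by (auto simp: adj_within_def)
    then show ?case using step.IH by simp
  qed simp
  moreover have "p \<noteq> v" "x \<noteq> v" using assms connected_in_refl[OF pW] by auto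
  ultimately show ?thesis using assms(1) by (simp add: connected_in_iff)
qed

lemma connected_in_closed:
  assumes "connected_in V E s t" "s \<in> A" "\<forall>z\<in>A. neighbours E z \<subseteq> A"
  shows "t \<in> A"
proof -
  from assms(1) have "(s, t) \<in> (adj_within V E)\<^sup>*" by (simp add: connected_in_iff)
  then show ?thesis
  proof (induction rule: rtrancl_induct)
    case (step y z)
    then show ?case using assms(3) by (auto simp: adj_within_def neighbours_def)
  qed (rule assms(2))
qed

lemma connected_in_reaches_neighbour:
  assumes "connected_in V E y u" and "y \<noteq> u"
  obtains n where "n \<in> neighbours E u" and "connected_in (V - {u}) E y n"
proof -
  from assms(1) have yV: "y \<in> V" and path: "(y, u) \<in> (adj_within V E)\<^sup>*"
    by (auto simp: connected_in_iff)
  have "(t \<noteq> u \<and> connected_in (V - {u}) E y t) \<or>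
      (\<exists>n\<in>neighbours E u. connected_in (V - {u}) E y n)"
    if "(y, t) \<in> (adj_within V E)\<^sup>*" for t
    using that
  proof (induction rule: rtrancl_induct)
    case base
    then show ?case using yV assms(2) by (simp add: connected_in_refl)
  next
    case (step s t)
    show ?case
    proof (cases "s \<noteq> u \<and> connected_in (V - {u}) E y s")
      case True
      show ?thesis
      proof (cases "t = u")
        case True
        then have "s \<in> neighbours E u"
          using step.hyps(2) by (simp add: adj_within_def neighbours_def insert_commute)
        then show ?thesis using \<open>s \<noteq> u \<and> connected_in (V - {u}) E y s\<close> by blast
      next
        case False
        then have "connected_in (V - {u}) E s t"
          using step.hyps(2) True by (intro connected_in_edge) (auto simp: adj_within_def)
        with True have "connected_in (V - {u}) E y t" by (blast intro: connected_in_trans)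
        with False show ?thesis by blast
      qed
    qed (use step.IH in blast)
  qed
  from this[OF path] assms(2) show ?thesis using that by blast
qed

lemma connected_in_pendant:
  assumes "neighbours E a = {v}" and "connected_in (V - {v}) E a y"
  shows "y = a"
proof -
  from assms(2) have "(a, y) \<in> (adj_within (V - {v}) E)\<^sup>*" by (simp add: connected_in_iff)
  then show ?thesis
  proof (induction rule: rtrancl_induct)
    case (step s t)
    then have "t \<in> neighbours E a" by (simp add: adj_within_def neighbours_def)
    then show ?case using assms(1) step.hyps(2) by (auto simp: adj_within_def)
  qed simp
qed

lemma neighbours_sym: "y \<in> neighbours E v \<longleftrightarrow> v \<in> neighbours E y"
  by (simp add: neighbours_def insert_commute)

lemma neighbours_subset: "graph V E \<Longrightarrow> neighbours E v \<subseteq> V"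
  by (auto simp: graph_def neighbours_def)

lemma not_in_neighbours: "graph V E \<Longrightarrow> v \<notin> neighbours E v"
  by (auto simp: graph_def neighbours_def)

lemma graph_edge_ends: "graph V E \<Longrightarrow> {x, y} \<in> E \<Longrightarrow> x \<in> V \<and> y \<in> V \<and> x \<noteq> y"
  by (auto simp: graph_def)

lemma degree_eq_card_neighbours:
  assumes "graph V E"
  shows "degree E v = card (neighbours E v)"
proof -
  have "bij_betw (\<lambda>y. {v, y}) (neighbours E v) {e\<in>E. v \<in> e}"
  proof (rule bij_betw_imageI)
    show "inj_on (\<lambda>y. {v, y}) (neighbours E v)"
      using not_in_neighbours[OF assms] by (auto intro!: inj_onI simp: doubleton_eq_iff)
    have "\<exists>y. e = {v, y}" if "e \<in> E" "v \<in> e" for e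
    proof -
      from that assms have "card e = 2" by (auto simp: graph_def)
      then obtain p q where "e = {p, q}" by (auto simp: card_2_iff)
      then show ?thesis using that(2) by (auto simp: insert_commute)
    qed
    then show "(\<lambda>y. {v, y}) ` neighbours E v = {e \<in> E. v \<in> e}"
      by (auto simp: neighbours_def)
  qed
  then show ?thesis unfolding degree_def by (simp add: bij_betw_same_card)
qed

lemma rtrancl_path_nth:
  "rtrancl_path r x xs y \<Longrightarrow> i < length xs \<Longrightarrow> r ((x # xs) ! i) (xs ! i)"
proof (induction arbitrary: i rule: rtrancl_path.induct)
  case (step x y ys z)
  then show ?case by (cases i) (auto elim: rtrancl_path.cases)
qed simp

lemma rtrancl_path_last: "rtrancl_path r x xs y \<Longrightarrow> last (x # xs) = y"
  by (induction rule: rtrancl_path.induct) auto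

text \<open>A walk from p to q avoiding w, closed up through the common neighbour w, would be a
  cycle.\<close>
lemma tree_neighbours_disconnected:
  assumes tree: "is_tree V E" and "{w, p} \<in> E" and "{w, q} \<in> E" and "p \<noteq> q"
  shows "\<not> connected_in (V - {w}) E p q"
proof
  let ?W = "V - {w}"
  let ?r = "\<lambda>x y. (x, y) \<in> adj_within ?W E"
  assume "connected_in ?W E p q"
  then have pW: "p \<in> ?W" and "?r\<^sup>*\<^sup>* p q"
    by (auto simp: connected_in_iff rtranclp_rtrancl_eq)
  then obtain xs where "rtrancl_path ?r p xs q" by (auto simp: rtranclp_eq_rtrancl_path)
  then obtain xs where path: "rtrancl_path ?r p xs q" and dist: "distinct (p # xs)"
    by (rule rtrancl_path_distinct)
  have step: "?r ((p # xs) ! i) (xs ! i)" if "i < length xs" for i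
    using rtrancl_path_nth[OF path that] .
  have last: "last (p # xs) = q" using rtrancl_path_last[OF path] .
  then have "xs \<noteq> []" using \<open>p \<noteq> q\<close> by auto
  have "set xs \<subseteq> ?W"
  proof
    fix x assume "x \<in> set xs"
    then obtain i where "i < length xs" "x = xs ! i" by (auto simp: in_set_conv_nth)
    then show "x \<in> ?W" using step[of i] by (simp add: adj_within_def)
  qed
  let ?cs = "w # p # xs"
  have "is_cycle E ?cs"
    unfolding is_cycle_def
  proof (intro conjI allI impI)
    show "3 \<le> length ?cs" using \<open>xs \<noteq> []\<close> by (cases xs) auto
    show "distinct ?cs" using dist pW \<open>set xs \<subseteq> ?W\<close> by auto
    fix i assume i: "i < length ?cs"
    consider "i = 0" | "i = length xs + 1" | j where "i = Suc j" "j < length xs"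
      using i by (cases i) (auto simp: less_Suc_eq)
    then show "{?cs ! i, ?cs ! ((i + 1) mod length ?cs)} \<in> E"
    proof cases
      case 1
      then show ?thesis using \<open>{w, p} \<in> E\<close> by simp
    next
      case 2
      have "?cs ! i = q" using 2 last \<open>xs \<noteq> []\<close> by (simp add: last_conv_nth)
      then show ?thesis using 2 \<open>{w, q} \<in> E\<close> by (simp add: insert_commute)
    next
      case 3
      then show ?thesis using step[of j] by (simp add: adj_within_def)
    qed
  qed
  then show False using tree by (auto simp: is_tree_def)
qed

lemma cycle_vertex_two_neighbours:
  assumes cyc: "is_cycle E cs" and "x \<in> set cs"
  obtains y1 y2 where "y1 \<noteq> y2" "{x, y1} \<in> E" "{x, y2} \<in> E"
proof -
  define n where "n = length cs"
  have n: "n \<ge> 3" and "distinct cs" and edge: "\<And>i. i < n \<Longrightarrow> {cs ! i, cs ! ((i + 1) mod n)} \<in> E"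
    using cyc by (auto simp: is_cycle_def n_def)
  obtain i where i: "i < n" "cs ! i = x" using \<open>x \<in> set cs\<close> by (auto simp: in_set_conv_nth n_def)
  define j where "j = (if i = 0 then n - 1 else i - 1)"
  define k where "k = (if i = n - 1 then 0 else i + 1)"
  have "j < n" "k < n" "j \<noteq> k" using i n by (auto simp: j_def k_def)
  have "(j + 1) mod n = i" "(i + 1) mod n = k" using i n by (auto simp: j_def k_def)
  then have "{cs ! j, x} \<in> E" "{x, cs ! k} \<in> E" using edge \<open>j < n\<close> i by metis+
  moreover have "cs ! j \<noteq> cs ! k"
    using \<open>distinct cs\<close> \<open>j < n\<close> \<open>k < n\<close> \<open>j \<noteq> k\<close> by (simp add: nth_eq_iff_index_eq n_def)
  ultimately show ?thesis using that by (metis insert_commute)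
qed

section \<open>Branches and binary phylogenetic trees\<close>

definition branch :: "'a set \<Rightarrow> 'a set set \<Rightarrow> 'a \<Rightarrow> 'a \<Rightarrow> 'a set" where
  "branch V E v w = {x. connected_in (V - {v}) E w x}"

lemma finite_branch: "graph V E \<Longrightarrow> finite (branch V E v w)"
  by (rule finite_subset[of _ V]) (auto simp: branch_def connected_in_iff graph_def)

lemma branch_psubset:
  assumes tree: "is_tree V E" and "{v, w} \<in> E" and "{w, w'} \<in> E" and "w' \<noteq> v"
  shows "branch V E w w' \<subset> branch V E v w"
proof
  have g: "graph V E" using tree by (simp add: is_tree_def)
  have "w \<in> V" "w \<noteq> v" "w' \<in> V" "w' \<noteq> w"
    using graph_edge_ends[OF g \<open>{v, w} \<in> E\<close>] graph_edge_ends[OF g \<open>{w, w'} \<in> E\<close>] by auto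
  show "branch V E w w' \<subseteq> branch V E v w"
  proof
    fix x assume "x \<in> branch V E w w'"
    then have "connected_in (V - {w}) E w' x" by (simp add: branch_def)
    moreover have "\<not> connected_in (V - {w}) E w' v"
      using tree_neighbours_disconnected[OF tree \<open>{w, w'} \<in> E\<close> _ \<open>w' \<noteq> v\<close>] \<open>{v, w} \<in> E\<close>
      by (simp add: insert_commute)
    ultimately have "connected_in (V - {w} - {v}) E w' x" by (rule connected_in_avoid)
    then have "connected_in (V - {v}) E w' x" by (rule connected_in_mono) auto
    moreover have "connected_in (V - {v}) E w w'"
      using \<open>w \<in> V\<close> \<open>w \<noteq> v\<close> \<open>w' \<in> V\<close> \<open>w' \<noteq> v\<close> \<open>{w, w'} \<in> E\<close> by (intro connected_in_edge) auto
    ultimately show "x \<in> branch V E v w" by (auto simp: branch_def intro: connected_in_trans)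
  qed
  have "w \<in> branch V E v w" using \<open>w \<in> V\<close> \<open>w \<noteq> v\<close> by (simp add: branch_def connected_in_refl)
  moreover have "w \<notin> branch V E w w'" by (auto simp: branch_def connected_in_iff)
  ultimately show "branch V E w w' \<noteq> branch V E v w" by blast
qed

lemma binary_phylo_tree_is_tree: "binary_phylo_tree X V E \<Longrightarrow> is_tree V E"
  by (simp add: binary_phylo_tree_def)

lemma binary_phylo_tree_graph: "binary_phylo_tree X V E \<Longrightarrow> graph V E"
  by (simp add: binary_phylo_tree_def is_tree_def)

lemma binary_phylo_tree_connected:
  "binary_phylo_tree X V E \<Longrightarrow> x \<in> V \<Longrightarrow> y \<in> V \<Longrightarrow> connected_in V E x y"
  by (simp add: binary_phylo_tree_def is_tree_def)

lemma binary_phylo_tree_leaves_subset: "binary_phylo_tree X V E \<Longrightarrow> X \<subseteq> V"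
  by (simp add: binary_phylo_tree_def)

lemma binary_phylo_tree_leaf:
  assumes "binary_phylo_tree X V E" and "x \<in> X"
  obtains y where "neighbours E x = {y}"
proof -
  have "degree E x = 1" using assms by (auto simp: binary_phylo_tree_def)
  then show ?thesis
    using that degree_eq_card_neighbours[OF binary_phylo_tree_graph[OF assms(1)]]
    by (auto simp: card_1_singleton_iff)
qed

lemma binary_phylo_tree_leaf_neighbour:
  "binary_phylo_tree X V E \<Longrightarrow> x \<in> X \<Longrightarrow> y \<in> neighbours E x \<Longrightarrow> neighbours E x = {y}"
  by (metis binary_phylo_tree_leaf singletonD)

lemma binary_phylo_tree_interior:
  assumes "binary_phylo_tree X V E" and "x \<in> V - X"
  obtains p q r where "neighbours E x = {p, q, r}" and "p \<noteq> q" "p \<noteq> r" "q \<noteq> r"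
proof -
  have "degree E x = 3" using assms by (simp add: binary_phylo_tree_def)
  then show ?thesis
    using that degree_eq_card_neighbours[OF binary_phylo_tree_graph[OF assms(1)]]
    by (auto simp: card_3_iff)
qed

lemma binary_phylo_tree_interior_neighbour:
  assumes "binary_phylo_tree X V E" and "x \<in> V - X" and "n \<in> neighbours E x"
  obtains n' n'' where "neighbours E x = {n, n', n''}" and "n \<noteq> n'" "n \<noteq> n''" "n' \<noteq> n''"
proof -
  obtain p q r where "neighbours E x = {p, q, r}" "p \<noteq> q" "p \<noteq> r" "q \<noteq> r"
    using binary_phylo_tree_interior[OF assms(1,2)] .
  then show ?thesis using that assms(3) by (auto simp: insert_commute)
qed

lemma leaves_subset_neighbour_closed:
  assumes bpt: "binary_phylo_tree X V E" and "s \<in> V" "s \<in> A"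
    and closed: "\<forall>z\<in>A. neighbours E z \<subseteq> A"
  shows "X \<subseteq> A"
  using binary_phylo_tree_connected[OF bpt \<open>s \<in> V\<close>] binary_phylo_tree_leaves_subset[OF bpt]
    connected_in_closed[OF _ \<open>s \<in> A\<close> closed] by blast

lemma leaf_neighbour_interior:
  assumes bpt: "binary_phylo_tree X V E" and "card X \<ge> 3"
    and "x \<in> X" and "y \<in> neighbours E x"
  shows "y \<in> V - X"
proof
  show "y \<in> V" using neighbours_subset[OF binary_phylo_tree_graph[OF bpt]] assms(4) by auto
  show "y \<notin> X"
  proof
    assume "y \<in> X"
    have "neighbours E x = {y}" "neighbours E y = {x}"
      using binary_phylo_tree_leaf_neighbour[OF bpt] \<open>x \<in> X\<close> \<open>y \<in> X\<close> assms(4) neighbours_sym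
      by metis+
    then have "X \<subseteq> {x, y}"
      using binary_phylo_tree_leaves_subset[OF bpt] \<open>x \<in> X\<close>
      by (intro leaves_subset_neighbour_closed[OF bpt, of x]) auto
    then have "card X \<le> card {x, y}" by (intro card_mono) auto
    also have "\<dots> \<le> 2" by (simp add: card_insert_if)
    finally show False using \<open>card X \<ge> 3\<close> by simp
  qed
qed

lemma branch_contains_leaf:
  assumes bpt: "binary_phylo_tree X V E" and "{v, w} \<in> E"
  shows "\<exists>x\<in>X. x \<in> branch V E v w"
  using assms(2)
proof (induction "card (branch V E v w)" arbitrary: v w rule: less_induct)
  case less
  have g: "graph V E" using bpt by (rule binary_phylo_tree_graph)
  have "w \<in> V" "w \<noteq> v" using graph_edge_ends[OF g less.prems] by auto
  show ?case
  proof (cases "w \<in> X")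
    case True
    then show ?thesis using \<open>w \<in> V\<close> \<open>w \<noteq> v\<close> by (auto simp: branch_def intro: connected_in_refl)
  next
    case False
    have "v \<in> neighbours E w" using less.prems by (simp add: neighbours_def insert_commute)
    then obtain w' w'' where "neighbours E w = {v, w', w''}" "v \<noteq> w'"
      using binary_phylo_tree_interior_neighbour[OF bpt] \<open>w \<in> V\<close> False by blast
    then have "{w, w'} \<in> E" "w' \<noteq> v" by (auto simp: neighbours_def)
    then have sub: "branch V E w w' \<subset> branch V E v w"
      using branch_psubset[OF binary_phylo_tree_is_tree[OF bpt] less.prems] by blast
    then have "card (branch V E w w') < card (branch V E v w)"
      by (rule psubset_card_mono[OF finite_branch[OF g]])
    from less.hyps[OF this \<open>{w, w'} \<in> E\<close>] sub show ?thesis by blast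
  qed
qed

lemma supports_distinct:
  assumes "supports V E T a b c v"
  shows "a \<noteq> b" "a \<noteq> c" "b \<noteq> c"
  using assms by (auto simp: supports_def connected_in_refl)

lemma supports_pair:
  assumes "supports V E T x y z w" and "p \<in> {x, y, z}" "q \<in> {x, y, z}" "p \<noteq> q"
  shows "{p, q} \<in> T"
  using assms by (auto simp: supports_def insert_commute)

lemma triplet_cover_finite: "triplet_cover X V E T \<Longrightarrow> finite X \<Longrightarrow> finite T"
  unfolding triplet_cover_def by (auto intro: finite_subset[OF _ finite_Collect_subsets])

text \<open>A triple supporting \<open>u\<close> has one leaf in each branch at \<open>u\<close>; a branch consisting of
  a single leaf \<open>n\<close> forces \<open>n\<close> into the triple.\<close>
lemma supports_contains_pendant:
  assumes bpt: "binary_phylo_tree X V E" and "u \<in> V - X" and pendant: "neighbours E n = {u}"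
    and supp: "supports V E T x y z u"
  shows "n \<in> {x, y, z}"
proof (rule ccontr)
  let ?C = "connected_in (V - {u}) E"
  assume "n \<notin> {x, y, z}"
  have "n \<in> neighbours E u" using pendant neighbours_sym[of u E n] by simp
  then obtain n' n'' where nb: "neighbours E u = {n, n', n''}"
    using binary_phylo_tree_interior_neighbour[OF bpt \<open>u \<in> V - X\<close>] by blast
  have branches: "?C t n' \<or> ?C t n''" if "t \<in> V - {u}" "t \<noteq> n" for t
  proof -
    have "connected_in V E t u"
      using binary_phylo_tree_connected[OF bpt] that(1) \<open>u \<in> V - X\<close> by auto
    moreover have "t \<noteq> u" using that(1) by simp
    ultimately obtain m where m: "m \<in> neighbours E u" "?C t m"
      by (rule connected_in_reaches_neighbour)
    have "m \<noteq> n"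
    proof
      assume "m = n"
      then have "?C n t" using connected_in_sym[OF m(2)] by simp
      then show False using connected_in_pendant[OF pendant] that(2) by simp
    qed
    then show ?thesis using m nb by auto
  qed
  have same: "?C p q" if "?C p m" "?C q m" for p q m
    using connected_in_trans[OF that(1) connected_in_sym[OF that(2)]] .
  have "x \<in> V - {u}" "y \<in> V - {u}" "z \<in> V - {u}"
    using supp by (simp_all add: supports_def)
  then have "?C x n' \<or> ?C x n''" "?C y n' \<or> ?C y n''" "?C z n' \<or> ?C z n''"
    using branches \<open>n \<notin> {x, y, z}\<close> by auto
  moreover have "\<not> ?C x y" "\<not> ?C x z" "\<not> ?C y z"
    using supp by (simp_all add: supports_def)
  ultimately show False by (blast dest: same)
qed

lemma triplet_cover_all_pairs:
  assumes bpt: "binary_phylo_tree X V E"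
  shows "triplet_cover X V E {p. p \<subseteq> X \<and> card p = 2}"
  unfolding triplet_cover_def
proof (intro conjI ballI subset_refl)
  let ?T = "{p. p \<subseteq> X \<and> card p = 2}"
  fix v assume "v \<in> interior X V"
  then have v: "v \<in> V - X" by (simp add: interior_def)
  let ?C = "connected_in (V - {v}) E"
  obtain n1 n2 n3 where n: "neighbours E v = {n1, n2, n3}" "n1 \<noteq> n2" "n1 \<noteq> n3" "n2 \<noteq> n3"
    using binary_phylo_tree_interior[OF bpt v] .
  have e: "{v, n1} \<in> E" "{v, n2} \<in> E" "{v, n3} \<in> E" using n(1) by (auto simp: neighbours_def)
  obtain x1 x2 x3 where x: "x1 \<in> X" "x2 \<in> X" "x3 \<in> X"
    and "x1 \<in> branch V E v n1" "x2 \<in> branch V E v n2" "x3 \<in> branch V E v n3"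
    using branch_contains_leaf[OF bpt e(1)] branch_contains_leaf[OF bpt e(2)]
      branch_contains_leaf[OF bpt e(3)] by blast
  then have c: "?C n1 x1" "?C n2 x2" "?C n3 x3" by (simp_all add: branch_def)
  have apart: "\<not> ?C xi xj"
    if "?C ni xi" "?C nj xj" "{v, ni} \<in> E" "{v, nj} \<in> E" "ni \<noteq> nj" for ni nj xi xj
  proof
    assume "?C xi xj"
    then have "?C ni nj"
      using that(1,2) connected_in_trans connected_in_sym by metis
    then show False
      using tree_neighbours_disconnected[OF binary_phylo_tree_is_tree[OF bpt] that(3-5)] by simp
  qed
  have "x1 \<in> V - {v}" "x2 \<in> V - {v}" "x3 \<in> V - {v}"
    using c by (auto simp: connected_in_iff)
  moreover have "\<not> ?C x1 x2" "\<not> ?C x1 x3" "\<not> ?C x2 x3"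
    using apart c e n(2-4) by blast+
  moreover from this have "x1 \<noteq> x2" "x1 \<noteq> x3" "x2 \<noteq> x3"
    using calculation(1-3) connected_in_refl by metis+
  ultimately have "supports V E ?T x1 x2 x3 v"
    using x by (auto simp: supports_def card_insert_if)
  then show "\<exists>a\<in>X. \<exists>b\<in>X. \<exists>c\<in>X. supports V E ?T a b c v" using x by blast
qed

section \<open>Pruning a cherry\<close>

locale cherry =
  fixes X V :: "'a set" and E :: "'a set set" and a b v u :: 'a
  assumes bpt: "binary_phylo_tree X V E"
    and a: "a \<in> X" and b: "b \<in> X" and ab: "a \<noteq> b"
    and v: "v \<in> V - X" and u: "u \<in> V - X"
    and neighbours_v: "neighbours E v = {a, b, u}"
    and neighbours_a: "neighbours E a = {v}" and neighbours_b: "neighbours E b = {v}"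
begin

text \<open>Pruning the leaf \<open>a\<close> and suppressing \<open>v\<close> replaces the edges \<open>av\<close>, \<open>bv\<close>, \<open>vu\<close> by
  \<open>bu\<close>, giving a binary phylogenetic tree on \<open>X - {a}\<close>.\<close>
definition "V' = V - {a, v}"
definition "E' = {e\<in>E. v \<notin> e} \<union> {{b, u}}"

lemma graph: "graph V E"
  using bpt by (rule binary_phylo_tree_graph)

lemma leaves_subset: "X \<subseteq> V"
  using bpt by (rule binary_phylo_tree_leaves_subset)

lemma distinct: "u \<noteq> v" "u \<noteq> a" "u \<noteq> b" "v \<noteq> a" "v \<noteq> b"
  using neighbours_v not_in_neighbours[OF graph, of v] u v a b by auto

lemma in_V: "a \<in> V" "b \<in> V" "u \<in> V" "v \<in> V"
  using a b u v leaves_subset by auto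

lemma edges: "{a, v} \<in> E" "{b, v} \<in> E" "{v, u} \<in> E"
  using neighbours_a neighbours_b neighbours_v by (auto simp: neighbours_def)

lemma edge_a: "{a, y} \<in> E \<Longrightarrow> y = v"
  using neighbours_a by (auto simp: neighbours_def)

lemma edge_b: "{b, y} \<in> E \<Longrightarrow> y = v"
  using neighbours_b by (auto simp: neighbours_def)

lemma edge_v: "{v, y} \<in> E \<Longrightarrow> y = a \<or> y = b \<or> y = u"
  using neighbours_v by (auto simp: neighbours_def)

lemma pruned_neighbours_b: "neighbours E' b = {u}"
  using edge_b distinct by (auto simp: E'_def neighbours_def doubleton_eq_iff)

lemma pruned_neighbours_u: "neighbours E' u = insert b (neighbours E u - {v})"
  using distinct by (auto simp: E'_def neighbours_def doubleton_eq_iff insert_commute)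

lemma pruned_neighbours_other: "x \<notin> {a, v, b, u} \<Longrightarrow> neighbours E' x = neighbours E x"
  using edge_v[of x] by (auto simp: E'_def neighbours_def doubleton_eq_iff insert_commute)

lemma pruned_graph: "graph V' E'"
  unfolding graph_def
proof (intro conjI ballI)
  show "finite V'" using graph by (simp add: graph_def V'_def)
next
  fix e assume "e \<in> E'"
  then show "card e = 2" using graph distinct by (auto simp: graph_def E'_def)
next
  fix e assume e: "e \<in> E'"
  show "e \<subseteq> V'"
  proof (cases "e = {b, u}")
    case True
    then show ?thesis using distinct in_V ab by (auto simp: V'_def)
  next
    case False
    then have "e \<in> E" "v \<notin> e" using e by (auto simp: E'_def)
    then have "card e = 2" "e \<subseteq> V" using graph by (auto simp: graph_def)
    then obtain x y where "e = {x, y}" by (auto simp: card_2_iff)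
    moreover have "a \<notin> e"
      using edge_a[of x] edge_a[of y] \<open>e \<in> E\<close> \<open>v \<notin> e\<close> \<open>e = {x, y}\<close> \<open>card e = 2\<close>
      by (auto simp: insert_commute)
    ultimately show ?thesis using \<open>v \<notin> e\<close> \<open>e \<subseteq> V\<close> by (auto simp: V'_def)
  qed
qed

text \<open>Walks in the pruned tree lift to walks in \<open>T\<close> by detouring \<open>bu\<close> through \<open>v\<close>; conversely,
  walks in \<open>T\<close> between vertices other than \<open>a\<close>, \<open>v\<close> pass through \<open>v\<close> only as \<open>b v u\<close> or
  \<open>u v b\<close>.\<close>
lemma pruned_connected_imp_connected:
  assumes "connected_in (W - {a, v}) E' x y" and "v \<in> W"
  shows "connected_in W E x y"
proof -
  have "adj_within (W - {a, v}) E' \<subseteq> (adj_within W E)\<^sup>*"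
  proof (rule subrelI)
    fix p q assume pq: "(p, q) \<in> adj_within (W - {a, v}) E'"
    show "(p, q) \<in> (adj_within W E)\<^sup>*"
    proof (cases "{p, q} = {b, u}")
      case False
      then show ?thesis using pq by (auto simp: adj_within_def E'_def)
    next
      case True
      have "(b, v) \<in> adj_within W E" "(v, u) \<in> adj_within W E"
        using edges \<open>v \<in> W\<close> pq True by (auto simp: adj_within_def doubleton_eq_iff insert_commute)
      then have "(b, u) \<in> (adj_within W E)\<^sup>*" "(u, b) \<in> (adj_within W E)\<^sup>*"
        using adj_within_sym by (meson converse_rtrancl_into_rtrancl r_into_rtrancl)+
      then show ?thesis using True by (auto simp: doubleton_eq_iff)
    qed
  qed
  then have "(adj_within (W - {a, v}) E')\<^sup>* \<subseteq> (adj_within W E)\<^sup>*"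
    by (rule rtrancl_subset_rtrancl)
  then show ?thesis using assms by (auto simp: connected_in_iff)
qed

lemma connected_imp_pruned_connected:
  assumes "connected_in W E x y" and "x \<notin> {a, v}" "y \<notin> {a, v}" and "b \<in> W"
  shows "connected_in (W - {a, v}) E' x y"
proof -
  let ?R = "adj_within (W - {a, v}) E'"
  have bu: "(b, u) \<in> ?R" "(u, b) \<in> ?R" if "u \<in> W"
    using that \<open>b \<in> W\<close> distinct ab by (auto simp: adj_within_def E'_def insert_commute)
  have "(t \<notin> {a, v} \<longrightarrow> (x, t) \<in> ?R\<^sup>*) \<and> (t \<in> {a, v} \<longrightarrow> (x, b) \<in> ?R\<^sup>*)"
    if "(x, t) \<in> (adj_within W E)\<^sup>*" for t
    using that
  proof (induction rule: rtrancl_induct)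
    case base
    then show ?case using assms(2) by simp
  next
    case (step s t)
    then have st: "s \<in> W" "t \<in> W" "{s, t} \<in> E" by (simp_all add: adj_within_def)
    have "(s \<notin> {a, v} \<and> t \<notin> {a, v}) \<or> (s \<in> {b, u} \<and> t = v) \<or> (s = v \<and> t \<in> {b, u})
        \<or> (s \<in> {a, v} \<and> t \<in> {a, v})"
      using edge_a[of s] edge_a[of t] edge_v[of s] edge_v[of t] st(3) by (auto simp: insert_commute)
    then show ?case
    proof (elim disjE conjE)
      assume "s \<notin> {a, v}" "t \<notin> {a, v}"
      then have "(s, t) \<in> ?R" using st by (auto simp: adj_within_def E'_def)
      then show ?thesis using \<open>s \<notin> {a, v}\<close> \<open>t \<notin> {a, v}\<close> step.IH
        by (meson rtrancl.rtrancl_into_rtrancl)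
    next
      assume "s \<in> {b, u}" "t = v"
      then show ?thesis using step.IH bu st(1) distinct by (auto intro: rtrancl.rtrancl_into_rtrancl)
    next
      assume "s = v" "t \<in> {b, u}"
      then show ?thesis using step.IH bu st(2) distinct by (auto intro: rtrancl.rtrancl_into_rtrancl)
    qed (use step.IH in auto)
  qed
  then show ?thesis using assms by (auto simp: connected_in_iff)
qed

lemma pruned_connected: "x \<in> V' \<Longrightarrow> y \<in> V' \<Longrightarrow> connected_in V' E' x y"
  using connected_imp_pruned_connected[of V x y] binary_phylo_tree_connected[OF bpt] in_V
  by (auto simp: V'_def)

lemma pruned_acyclic: "\<not> is_cycle E' cs"
proof
  assume cyc: "is_cycle E' cs"
  have "b \<notin> set cs"
  proof
    assume "b \<in> set cs"
    then obtain y1 y2 where "y1 \<noteq> y2" "{b, y1} \<in> E'" "{b, y2} \<in> E'"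
      using cycle_vertex_two_neighbours[OF cyc] by blast
    then have "y1 \<in> neighbours E' b" "y2 \<in> neighbours E' b" by (simp_all add: neighbours_def)
    then show False using pruned_neighbours_b \<open>y1 \<noteq> y2\<close> by simp
  qed
  have "is_cycle E cs"
    unfolding is_cycle_def
  proof (intro conjI allI impI)
    show "3 \<le> length cs" "distinct cs" using cyc by (simp_all add: is_cycle_def)
    fix i assume i: "i < length cs"
    then have "(i + 1) mod length cs < length cs" by (intro mod_less_divisor) linarith
    then have "cs ! i \<in> set cs" "cs ! ((i + 1) mod length cs) \<in> set cs"
      using i by simp_all
    then have "cs ! i \<noteq> b" "cs ! ((i + 1) mod length cs) \<noteq> b"
      using \<open>b \<notin> set cs\<close> by auto
    moreover have "{cs ! i, cs ! ((i + 1) mod length cs)} \<in> E'"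
      using cyc i by (simp add: is_cycle_def)
    ultimately show "{cs ! i, cs ! ((i + 1) mod length cs)} \<in> E"
      by (auto simp: E'_def doubleton_eq_iff)
  qed
  then show False using bpt by (simp add: binary_phylo_tree_def is_tree_def)
qed

lemma pruned_degree: "x \<in> V' \<Longrightarrow> degree E' x = (if x = b then 1 else degree E x)"
proof -
  assume x: "x \<in> V'"
  have "card (neighbours E' x) = (if x = b then 1 else card (neighbours E x))"
  proof (cases "x = u")
    case True
    have fin: "finite (neighbours E u)"
      using finite_subset[OF neighbours_subset[OF graph]] graph unfolding graph_def by blast
    have "v \<in> neighbours E u" "b \<notin> neighbours E u"
      using edges(3) edge_b[of u] distinct by (auto simp: neighbours_def insert_commute)
    then have "card (insert b (neighbours E u - {v})) = card (neighbours E u)"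
      using fin card_Suc_Diff1 card_insert_disjoint by (metis DiffD1 finite_Diff)
    then show ?thesis using True distinct pruned_neighbours_u by simp
  next
    case False
    then show ?thesis
      using x pruned_neighbours_b pruned_neighbours_other[of x] by (auto simp: V'_def)
  qed
  then show ?thesis
    using degree_eq_card_neighbours[OF graph] degree_eq_card_neighbours[OF pruned_graph] by simp
qed

lemma binary_phylo_tree_pruned: "binary_phylo_tree (X - {a}) V' E'"
  unfolding binary_phylo_tree_def is_tree_def
proof (intro conjI ballI)
  show "graph V' E'" by (rule pruned_graph)
  show "V' \<noteq> {}" using in_V distinct ab by (auto simp: V'_def)
  show "\<And>x y. x \<in> V' \<Longrightarrow> y \<in> V' \<Longrightarrow> connected_in V' E' x y" by (rule pruned_connected)
  show "\<nexists>cs. is_cycle E' cs" using pruned_acyclic by simp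
  show "X - {a} \<subseteq> V'" using leaves_subset v by (auto simp: V'_def)
  have leaf: "x \<in> X \<longleftrightarrow> degree E x = 1" if "x \<in> V" for x
    using bpt that by (auto simp: binary_phylo_tree_def)
  show "{x \<in> V'. degree E' x = 1} = X - {a}"
  proof (rule set_eqI)
    fix x
    show "x \<in> {x \<in> V'. degree E' x = 1} \<longleftrightarrow> x \<in> X - {a}"
    proof (cases "x \<in> V'")
      case True
      then have "x \<in> V" "x \<noteq> a" by (auto simp: V'_def)
      then show ?thesis using True pruned_degree[OF True] leaf[of x] b by auto
    next
      case False
      then show ?thesis using leaves_subset v by (auto simp: V'_def)
    qed
  qed
  show "degree E' x = 3" if "x \<in> V' - (X - {a})" for x
    using that pruned_degree[of x] bpt b by (auto simp: V'_def binary_phylo_tree_def)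
qed

lemma connected_leaves_cherry:
  assumes "w \<in> V - X" and "w \<noteq> v"
  shows "connected_in (V - {w}) E a b"
proof -
  have "w \<noteq> a" "w \<noteq> b" using assms a b by auto
  then have "connected_in (V - {w}) E a v" "connected_in (V - {w}) E v b"
    using in_V edges assms by (auto intro!: connected_in_edge simp: insert_commute)
  then show ?thesis by (rule connected_in_trans)
qed

lemma cover_contains_cherry_pairs:
  assumes "triplet_cover X V E T"
  obtains c where "c \<in> X" "c \<noteq> a" "c \<noteq> b" "{a, b} \<in> T" "{a, c} \<in> T" "{b, c} \<in> T"
proof -
  have "v \<in> interior X V" using v by (simp add: interior_def)
  then obtain x y z where xyz: "x \<in> X" "y \<in> X" "z \<in> X" and supp: "supports V E T x y z v"
    using assms by (auto simp: triplet_cover_def)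
  have "a \<in> {x, y, z}" "b \<in> {x, y, z}"
    using supports_contains_pendant[OF bpt v neighbours_a supp]
      supports_contains_pendant[OF bpt v neighbours_b supp] .
  moreover have "x \<noteq> y" "x \<noteq> z" "y \<noteq> z" using supports_distinct[OF supp] .
  ultimately obtain c where "c \<in> {x, y, z}" "c \<noteq> a" "c \<noteq> b" by auto
  then show ?thesis
    using that xyz supports_pair[OF supp] \<open>a \<in> {x, y, z}\<close> \<open>b \<in> {x, y, z}\<close> ab by blast
qed

text \<open>Merging the leaf \<open>a\<close> into \<open>b\<close>: the pair \<open>ab\<close> is dropped and \<open>ac\<close> collapses onto \<open>bc\<close>.\<close>
abbreviation merge :: "'a \<Rightarrow> 'a" where
  "merge \<equiv> id(a := b)"

definition pruned_cover :: "'a set set \<Rightarrow> 'a set set" where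
  "pruned_cover T = (\<lambda>p. merge ` p) ` (T - {{a, b}})"

lemma card_pruned_cover:
  assumes "triplet_cover X V E T" and "finite T"
  shows "card (pruned_cover T) + 2 \<le> card T"
proof -
  obtain c where c: "c \<noteq> a" "c \<noteq> b" "{a, b} \<in> T" "{a, c} \<in> T" "{b, c} \<in> T"
    using cover_contains_cherry_pairs[OF assms(1)] by blast
  have "pruned_cover T = (\<lambda>p. merge ` p) ` (T - {{a, b}, {a, c}})"
  proof -
    have "merge ` {a, c} = merge ` {b, c}" using c by auto
    moreover have "{b, c} \<in> T - {{a, b}, {a, c}}" using c ab by (auto simp: doubleton_eq_iff)
    ultimately show ?thesis unfolding pruned_cover_def by blast
  qed
  then have "card (pruned_cover T) \<le> card (T - {{a, b}, {a, c}})"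
    by (simp add: card_image_le assms(2))
  also have "\<dots> = card T - 2"
    using c ab assms(2) by (simp add: card_Diff_subset doubleton_eq_iff)
  finally show ?thesis
    using card_mono[OF assms(2), of "{{a, b}, {a, c}}"] c ab by (simp add: doubleton_eq_iff)
qed

lemma pruned_cover_apart:
  assumes w: "w \<in> V - X" "w \<noteq> v" and "s \<in> X" "t \<in> X"
    and apart: "\<not> connected_in (V - {w}) E s t"
  shows "\<not> connected_in (V' - {w}) E' (merge s) (merge t)"
proof
  have joined: "connected_in (V - {w}) E x (merge x)" if "x \<in> X" for x
    using connected_leaves_cherry[OF w] connected_in_refl[of x "V - {w}"] that w leaves_subset
    by auto
  assume "connected_in (V' - {w}) E' (merge s) (merge t)"
  moreover have "V' - {w} = (V - {w}) - {a, v}" by (auto simp: V'_def)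
  ultimately have "connected_in (V - {w}) E (merge s) (merge t)"
    using pruned_connected_imp_connected[of "V - {w}"] in_V w by auto
  then have "connected_in (V - {w}) E s t"
    using joined[OF \<open>s \<in> X\<close>] joined[OF \<open>t \<in> X\<close>] connected_in_trans connected_in_sym by meson
  then show False using apart by simp
qed

lemma merge_mem: "x \<in> X \<Longrightarrow> merge x \<in> X - {a}"
  using b ab by auto

lemma pruned_cover_pairs:
  assumes cover: "triplet_cover X V E T"
  shows "pruned_cover T \<subseteq> {p. p \<subseteq> X - {a} \<and> card p = 2}"
proof
  fix p assume "p \<in> pruned_cover T"
  then obtain q where q: "q \<in> T" "q \<noteq> {a, b}" "p = merge ` q"
    by (auto simp: pruned_cover_def)
  have "q \<subseteq> X" "card q = 2" using cover q(1) by (auto simp: triplet_cover_def)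
  then obtain s t where "q = {s, t}" "s \<noteq> t" "s \<in> X" "t \<in> X" by (auto simp: card_2_iff)
  moreover have "merge s \<noteq> merge t"
    using q(2) \<open>q = {s, t}\<close> \<open>s \<noteq> t\<close> by (auto simp: insert_commute)
  moreover have "p = {merge s, merge t}"
    using q(3) \<open>q = {s, t}\<close> by (simp only: image_insert image_empty)
  ultimately show "p \<in> {p. p \<subseteq> X - {a} \<and> card p = 2}"
    using merge_mem by auto
qed

lemma triplet_cover_pruned:
  assumes cover: "triplet_cover X V E T"
  shows "triplet_cover (X - {a}) V' E' (pruned_cover T)"
  unfolding triplet_cover_def
proof (intro conjI ballI)
  show "pruned_cover T \<subseteq> {p. p \<subseteq> X - {a} \<and> card p = 2}"
    using pruned_cover_pairs[OF cover] .
next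
  fix w assume "w \<in> interior (X - {a}) V'"
  then have w: "w \<in> V - X" "w \<noteq> v" using a by (auto simp: interior_def V'_def)
  then have "w \<in> interior X V" by (simp add: interior_def)
  then obtain x y z where xyz: "x \<in> X" "y \<in> X" "z \<in> X" and supp: "supports V E T x y z w"
    using cover unfolding triplet_cover_def by blast
  have kept: "{merge s, merge t} \<in> pruned_cover T"
    if "{s, t} \<in> T" and apart: "\<not> connected_in (V - {w}) E s t" for s t
  proof -
    have "{s, t} \<noteq> {a, b}"
      using apart connected_leaves_cherry[OF w] connected_in_sym[OF connected_leaves_cherry[OF w]]
      by (auto simp: doubleton_eq_iff)
    then have "merge ` {s, t} \<in> pruned_cover T" using that(1) unfolding pruned_cover_def by blast
    then show ?thesis by (simp only: image_insert image_empty)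
  qed
  have "X - {a} \<subseteq> V' - {w}" using leaves_subset v w by (auto simp: V'_def)
  then have "merge x \<in> V' - {w}" "merge y \<in> V' - {w}" "merge z \<in> V' - {w}"
    using merge_mem xyz by blast+
  moreover have "\<not> connected_in (V' - {w}) E' (merge x) (merge y)"
    "\<not> connected_in (V' - {w}) E' (merge x) (merge z)"
    "\<not> connected_in (V' - {w}) E' (merge y) (merge z)"
    using pruned_cover_apart[OF w] xyz supp by (simp_all add: supports_def)
  moreover have "{merge x, merge y} \<in> pruned_cover T" "{merge x, merge z} \<in> pruned_cover T"
    "{merge y, merge z} \<in> pruned_cover T"
    using kept supp by (simp_all add: supports_def)
  ultimately have "supports V' E' (pruned_cover T) (merge x) (merge y) (merge z) w"
    unfolding supports_def by blast
  then show "\<exists>a'\<in>X - {a}. \<exists>b'\<in>X - {a}. \<exists>c'\<in>X - {a}. supports V' E' (pruned_cover T) a' b' c' w"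
    using merge_mem xyz by blast
qed

lemma pruned_cover_pair_at_b:
  assumes "triplet_cover (X - {a}) V' E' T"
  obtains c where "c \<in> X" "c \<noteq> a" "c \<noteq> b" "{b, c} \<in> T"
proof -
  have u': "u \<in> V' - (X - {a})" using u distinct by (auto simp: V'_def)
  then have "u \<in> interior (X - {a}) V'" by (simp add: interior_def)
  then obtain x y z where xyz: "x \<in> X - {a}" "y \<in> X - {a}" "z \<in> X - {a}"
    and supp: "supports V' E' T x y z u"
    using assms unfolding triplet_cover_def by blast
  have "b \<in> {x, y, z}"
    using supports_contains_pendant[OF binary_phylo_tree_pruned u' pruned_neighbours_b supp] .
  moreover have "x \<noteq> y" "x \<noteq> z" "y \<noteq> z" using supports_distinct[OF supp] .
  ultimately obtain c where "c \<in> {x, y, z}" "c \<noteq> b" by auto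
  then show ?thesis using that xyz supports_pair[OF supp] \<open>b \<in> {x, y, z}\<close> by blast
qed

lemma triplet_cover_extended:
  assumes cover: "triplet_cover (X - {a}) V' E' T"
    and c: "c \<in> X" "c \<noteq> a" "c \<noteq> b" "{b, c} \<in> T"
  shows "triplet_cover X V E (insert {a, b} (insert {a, c} T))"
  unfolding triplet_cover_def
proof (intro conjI ballI)
  let ?T = "insert {a, b} (insert {a, c} T)"
  show "?T \<subseteq> {p. p \<subseteq> X \<and> card p = 2}"
    using cover a b c ab by (auto simp: triplet_cover_def)
  fix w assume "w \<in> interior X V"
  then have w: "w \<in> V - X" by (simp add: interior_def)
  show "\<exists>x\<in>X. \<exists>y\<in>X. \<exists>z\<in>X. supports V E ?T x y z w"
  proof (cases "w = v")
    case True
    have "a \<in> V - {v}" "b \<in> V - {v}" "c \<in> V - {v}"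
      using a b c v leaves_subset by auto
    moreover have "\<not> connected_in (V - {v}) E a b" "\<not> connected_in (V - {v}) E a c"
      using connected_in_pendant[OF neighbours_a] ab c(2) by blast+
    moreover have "\<not> connected_in (V - {v}) E b c"
      using connected_in_pendant[OF neighbours_b] c(3) by blast
    ultimately have "supports V E ?T a b c v" using c(4) by (simp add: supports_def)
    then show ?thesis using True a b c(1) by blast
  next
    case False
    then have "w \<in> interior (X - {a}) V'" using w a by (auto simp: interior_def V'_def)
    then obtain x y z where xyz: "x \<in> X - {a}" "y \<in> X - {a}" "z \<in> X - {a}"
      and supp: "supports V' E' T x y z w"
      using cover unfolding triplet_cover_def by blast
    have V'_w: "V' - {w} = (V - {w}) - {a, v}" by (auto simp: V'_def)
    have apart: "\<not> connected_in (V - {w}) E s t"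
      if "\<not> connected_in (V' - {w}) E' s t" "s \<in> V' - {w}" "t \<in> V' - {w}" for s t
    proof
      assume "connected_in (V - {w}) E s t"
      then have "connected_in (V' - {w}) E' s t"
        using connected_imp_pruned_connected[of "V - {w}" s t] that(2,3) b w in_V V'_w
        by (auto simp: V'_def)
      then show False using that(1) by simp
    qed
    have "supports V E ?T x y z w"
      using supp apart by (auto simp: supports_def V'_def)
    then show ?thesis using xyz by blast
  qed
qed

lemma card_triplet_cover_extended:
  assumes "triplet_cover (X - {a}) V' E' T" and "finite T" and "c \<noteq> a" "c \<noteq> b"
  shows "card (insert {a, b} (insert {a, c} T)) = card T + 2"
proof -
  have "{a, b} \<notin> T" "{a, c} \<notin> T" using assms(1) by (auto simp: triplet_cover_def)
  moreover have "{a, b} \<noteq> {a, c}" using assms(4) by (auto simp: doubleton_eq_iff)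
  ultimately show ?thesis using assms(2) by simp
qed

end

section \<open>Existence of cherries and the bound\<close>

text \<open>Take an edge \<open>vw\<close> with \<open>w\<close> interior whose branch at \<open>v\<close> is smallest: a non-leaf neighbour
  \<open>w'\<close> \<open>\<noteq> v\<close> of \<open>w\<close> would give the smaller branch at \<open>w\<close> towards \<open>w'\<close>.\<close>
lemma interior_vertex_with_two_leaves:
  assumes bpt: "binary_phylo_tree X V E" and "card X \<ge> 3"
  obtains v w a b where "{v, w} \<in> E" "w \<in> V - X" "neighbours E w = {v, a, b}"
    "a \<in> X" "b \<in> X" "a \<noteq> b"
proof -
  have g: "graph V E" using bpt by (rule binary_phylo_tree_graph)
  define P where "P = {(v, w). {v, w} \<in> E \<and> w \<in> V - X}"
  have "X \<noteq> {}" using assms(2) by auto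
  then obtain x y where "x \<in> X" "neighbours E x = {y}"
    using binary_phylo_tree_leaf[OF bpt] by blast
  moreover from this have "y \<in> V - X"
    using leaf_neighbour_interior[OF bpt] assms(2) by simp
  moreover have "{x, y} \<in> E" using \<open>neighbours E x = {y}\<close> by (auto simp: neighbours_def)
  ultimately have "(x, y) \<in> P" by (simp add: P_def)
  then obtain p where "p \<in> P"
    and min: "\<And>q. q \<in> P \<Longrightarrow> card (branch V E (fst p) (snd p)) \<le> card (branch V E (fst q) (snd q))"
    using ex_has_least_nat[of "\<lambda>p. p \<in> P" "(x, y)" "\<lambda>p. card (branch V E (fst p) (snd p))"]
    by blast
  obtain v w where p: "p = (v, w)" by (cases p)
  have vw: "{v, w} \<in> E" and w: "w \<in> V - X" using \<open>p \<in> P\<close> p by (auto simp: P_def)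
  have "v \<in> neighbours E w" using vw by (simp add: neighbours_def insert_commute)
  then obtain a b where nw: "neighbours E w = {v, a, b}" "v \<noteq> a" "v \<noteq> b" "a \<noteq> b"
    using binary_phylo_tree_interior_neighbour[OF bpt w] by blast
  have leaf: "w' \<in> X" if "w' \<in> neighbours E w" "w' \<noteq> v" for w'
  proof (rule ccontr)
    assume "w' \<notin> X"
    have "{w, w'} \<in> E" using that(1) by (simp add: neighbours_def)
    moreover have "w' \<in> V" using that(1) neighbours_subset[OF g] by auto
    ultimately have "(w, w') \<in> P" using \<open>w' \<notin> X\<close> by (simp add: P_def)
    then have "card (branch V E v w) \<le> card (branch V E w w')" using min[of "(w, w')"] p by simp
    moreover have "branch V E w w' \<subset> branch V E v w"
      using branch_psubset[OF binary_phylo_tree_is_tree[OF bpt] vw \<open>{w, w'} \<in> E\<close> that(2)] .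
    then have "card (branch V E w w') < card (branch V E v w)"
      by (rule psubset_card_mono[OF finite_branch[OF g]])
    ultimately show False by simp
  qed
  then show thesis using that[OF vw w nw(1)] nw by auto
qed

lemma binary_phylo_tree_has_cherry:
  assumes bpt: "binary_phylo_tree X V E" and "card X \<ge> 4"
  obtains a b v u where "cherry X V E a b v u"
proof -
  have "card X \<ge> 3" using assms(2) by simp
  then obtain v w a b where vw: "{v, w} \<in> E" and w: "w \<in> V - X"
    and nw: "neighbours E w = {v, a, b}" and "a \<in> X" "b \<in> X" "a \<noteq> b"
    using interior_vertex_with_two_leaves[OF bpt] by blast
  have wa: "w \<in> neighbours E a" and wb: "w \<in> neighbours E b" and wv: "w \<in> neighbours E v"
    using nw vw neighbours_sym[of _ E w] by (auto simp: neighbours_def)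
  have na: "neighbours E a = {w}"
    using binary_phylo_tree_leaf_neighbour[OF bpt \<open>a \<in> X\<close> wa] .
  have nb: "neighbours E b = {w}"
    using binary_phylo_tree_leaf_neighbour[OF bpt \<open>b \<in> X\<close> wb] .
  have "v \<notin> X"
  proof
    assume "v \<in> X"
    then have "neighbours E v = {w}"
      using binary_phylo_tree_leaf_neighbour[OF bpt _ wv] by simp
    then have "X \<subseteq> {w, v, a, b}"
      using w nw na nb by (intro leaves_subset_neighbour_closed[OF bpt, of w]) auto
    then have "X \<subseteq> {v, a, b}" using w by auto
    then have "card X \<le> card {v, a, b}" by (intro card_mono) auto
    also have "\<dots> \<le> 3" by (simp add: card_insert_if)
    finally show False using assms(2) by simp
  qed
  moreover have "v \<in> V" using graph_edge_ends[OF binary_phylo_tree_graph[OF bpt] vw] by simp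
  moreover have "neighbours E w = {a, b, v}" using nw by auto
  ultimately have "cherry X V E a b w v"
    using bpt \<open>a \<in> X\<close> \<open>b \<in> X\<close> \<open>a \<noteq> b\<close> w na nb by (simp add: cherry_def)
  then show thesis by (rule that)
qed

lemma triplet_cover_card_ge_three:
  assumes bpt: "binary_phylo_tree X V E" and "card X \<ge> 3" and cover: "triplet_cover X V E T"
  shows "card T \<ge> 3"
proof -
  have "X \<noteq> {}" using assms(2) by auto
  then obtain x y where "x \<in> X" "neighbours E x = {y}"
    using binary_phylo_tree_leaf[OF bpt] by blast
  then have "y \<in> interior X V"
    using leaf_neighbour_interior[OF bpt assms(2)] by (simp add: interior_def)
  then obtain p q r where supp: "supports V E T p q r y"
    using cover unfolding triplet_cover_def by blast
  have "{{p, q}, {p, r}, {q, r}} \<subseteq> T" using supp by (simp add: supports_def)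
  moreover have "finite T" using triplet_cover_finite[OF cover] assms(2) card.infinite by fastforce
  moreover have "card {{p, q}, {p, r}, {q, r}} = 3"
    using supports_distinct[OF supp] by (auto simp: doubleton_eq_iff card_insert_if)
  ultimately show ?thesis by (metis card_mono)
qed

lemma triplet_cover_card_lower_bound:
  assumes "binary_phylo_tree X V E" and "card X \<ge> 3" and "triplet_cover X V E T"
  shows "2 * card X - 3 \<le> card T"
  using assms
proof (induction "card X" arbitrary: X V E T rule: less_induct)
  case less
  show ?case
  proof (cases "card X = 3")
    case True
    then show ?thesis using triplet_cover_card_ge_three[OF less.prems] by simp
  next
    case False
    then have "card X \<ge> 4" using less.prems(2) by simp
    then obtain a b v u where "cherry X V E a b v u"
      using binary_phylo_tree_has_cherry[OF less.prems(1)] by blast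
    then interpret cherry X V E a b v u .
    have "finite X" "card (X - {a}) = card X - 1" using less.prems(2) a card.infinite by fastforce+
    then have "2 * card (X - {a}) - 3 \<le> card (pruned_cover T)"
      using False less.prems(2)
      by (intro less.hyps[OF _ binary_phylo_tree_pruned _ triplet_cover_pruned[OF less.prems(3)]])
        simp_all
    moreover have "card (pruned_cover T) + 2 \<le> card T"
      using card_pruned_cover less.prems(3) triplet_cover_finite \<open>finite X\<close> by blast
    ultimately show ?thesis using \<open>card (X - {a}) = card X - 1\<close> by linarith
  qed
qed

lemma exists_triplet_cover_card:
  assumes "binary_phylo_tree X V E" and "card X \<ge> 3"
  shows "\<exists>T. triplet_cover X V E T \<and> card T = 2 * card X - 3"
  using assms
proof (induction "card X" arbitrary: X V E rule: less_induct)
  case less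
  have "finite X" using less.prems(2) card.infinite by fastforce
  show ?case
  proof (cases "card X = 3")
    case True
    then have "card {p. p \<subseteq> X \<and> card p = 2} = 3"
      using n_subsets[OF \<open>finite X\<close>, of 2] by (simp add: choose_two)
    then show ?thesis using triplet_cover_all_pairs[OF less.prems(1)] True by auto
  next
    case False
    then have "card X \<ge> 4" using less.prems(2) by simp
    then obtain a b v u where "cherry X V E a b v u"
      using binary_phylo_tree_has_cherry[OF less.prems(1)] by blast
    then interpret cherry X V E a b v u .
    have "card (X - {a}) = card X - 1" using \<open>finite X\<close> a by simp
    then obtain T where T: "triplet_cover (X - {a}) V' E' T" "card T = 2 * card (X - {a}) - 3"
      using less.hyps[OF _ binary_phylo_tree_pruned] False less.prems(2) by fastforce
    obtain c where c: "c \<in> X" "c \<noteq> a" "c \<noteq> b" "{b, c} \<in> T"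
      using pruned_cover_pair_at_b[OF T(1)] .
    have "finite T" using triplet_cover_finite[OF T(1)] \<open>finite X\<close> by simp
    then show ?thesis
      using triplet_cover_extended[OF T(1) c] card_triplet_cover_extended[OF T(1) _ c(2,3)]
        T(2) \<open>card (X - {a}) = card X - 1\<close> \<open>card X \<ge> 4\<close>
      by (intro exI[of _ "insert {a, b} (insert {a, c} T)"]) simp
  qed
qed

theorem proposition3:
  fixes X V :: "'a set" and E :: "'a set set"
  assumes "finite X" and "card X \<ge> 3" and "binary_phylo_tree X V E"
  shows "(\<forall>\<T>. triplet_cover X V E \<T> \<longrightarrow> card \<T> \<ge> 2 * card X - 3)
       \<and> (\<exists>\<T>. triplet_cover X V E \<T> \<and> card \<T> = 2 * card X - 3)"
  using triplet_cover_card_lower_bound[OF assms(3,2)] exists_triplet_cover_card[OF assms(3,2)]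
  by blast

end
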